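(* Let $\mathcal{T}_{5,2}$ be the set of $s\in\mathcal{A}^*$ with $|s|\ne\mathsf{rmin}(s)+1$, $\mathrm{sebr}(s)\ne0$, $\mathrm{sebr}(s)\ge\mathrm{Rmin}(s)_{\mathsf{rpos}(s)+1}$ and $\mathrm{Prm}(s)_{\mathsf{rpos}(s)+1}\ne\mathrm{Prm}(s)_{\mathsf{rpos}(s)}+1$. For every $n$ there is a bijection $f_{5,2}$ from $\mathcal{T}_{5,2}\cap\mathcal{A}_n$ onto the set of $s\in\mathcal{A}_n$ such that $\mathsf{rpos}(s)\ne0$, the rightmost occurrence of $\mathrm{Rmin}(s)_{\mathsf{rpos}(s)-1}$ is not adjacent to the second rightmost occurrence of $\mathrm{Rmin}(s)_{\mathsf{rpos}(s)}$, and the two rightmost occurrences of $\mathrm{Rmin}(s)_{\mathsf{rpos}(s)}$ are not adjacent. Moreover for all $s$: $\mathsf{asc},\mathsf{rep},\mathsf{max},\mathsf{rmin}$ take equal values on $s$ and $f_{5,2}(s)$, $\mathsf{rpos}(s)=\mathsf{rpos}(f_{5,2}(s))-1$, $\mathsf{zero}(s)=\mathsf{zero}(f_{5,2}(s))+\chi(\mathsf{rpos}(s)=0)$ and $\mathsf{ealm}(s)=\mathsf{ealm}(f_{5,2}(s))-\chi(\mathrm{Prm}(s)_{\mathsf{rpos}(s)}=\mathsf{max}(s)+1)$.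
   Context: For a sequence $s$, $\mathsf{asc}(s)=|\{i:s_i<s_{i+1}\}|$. An ascent sequence is a sequence $s=(s_1,\dots,s_n)$ of non-negative integers with $s_1=0$, $s_i\le\mathsf{asc}(s_1,\dots,s_{i-1})+1$ for $i\ge2$; $\mathcal{A}_n$ is the set of those of length $n$, $|s|$ the length; $\mathcal{A}^*$ is the set of all ascent sequences except those of the form $(0,1,\dots,|s|-1)$. $\mathsf{rep}(s)=|s|-|\{s_i\}|$; $\mathsf{zero}(s)=|\{i:s_i=0\}|$; $\mathsf{max}(s)=|\{i:s_i=i-1\}|$; $\mathsf{ealm}(s)=s_{\mathsf{max}(s)+1}$ if $\mathsf{max}(s)\ne|s|$, else $0$. A right-to-left minimum is an entry $s_i$ with $s_i<s_j$ for all $j>i$; $\mathsf{rmin}(s)$ is their number; they are indexed $0,\dots,\mathsf{rmin}(s)-1$ from left to right, with values $\mathrm{Rmin}(s)_m$ and positions $\mathrm{Prm}(s)_m$. $\mathsf{rpos}(s)$: $0$ if $\mathsf{rmin}(s)=|s|$; otherwise the maximal $m$ such that the value $\mathrm{Rmin}(s)_m$ occurs at least twice after position $\mathrm{Prm}(s)_{m-1}$ (for $m=0$: at least twice in $s$), and $0$ if none. $\mathrm{sebr}(s)$ is the smallest entry strictly between the two rightmost occurrences of $\mathrm{Rmin}(s)_{\mathsf{rpos}(s)}$, and $0$ if they are adjacent; when $\mathsf{rpos}(s)=\mathsf{rmin}(s)-1$ one regards $\mathrm{sebr}(s)<\mathrm{Rmin}(s)_{\mathsf{rpos}(s)+1}$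 as true. $\chi(P)=1$ if $P$ holds, else $0$. *)

theory Defs
  imports Main
begin

text \<open>Sequences are lists of naturals; the paper's entry s_i (1-indexed) is s ! (i - 1).
  Positions (Prm, occurrences) are 1-indexed as in the paper.\<close>

definition asc :: "nat list \<Rightarrow> nat" where
  "asc s = card {i. i + 1 < length s \<and> s ! i < s ! (i + 1)}"

definition is_ascent_seq :: "nat list \<Rightarrow> bool" where
  "is_ascent_seq s \<longleftrightarrow>
     (\<forall>i < length s. s ! i \<le> (if i = 0 then 0 else asc (take i s) + 1))"

definition ascseqs :: "nat \<Rightarrow> nat list set" where
  "ascseqs n = {s. is_ascent_seq s \<and> length s = n}"

definition ascseqs_star :: "nat list set" where
  "ascseqs_star = {s. is_ascent_seq s \<and> s \<noteq> [0..<length s]}"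

definition rep :: "nat list \<Rightarrow> nat" where
  "rep s = length s - card (set s)"

definition zero :: "nat list \<Rightarrow> nat" where
  "zero s = card {i. i < length s \<and> s ! i = 0}"

definition maxst :: "nat list \<Rightarrow> nat" where
  "maxst s = card {i. 1 \<le> i \<and> i \<le> length s \<and> s ! (i - 1) = i - 1}"

definition ealm :: "nat list \<Rightarrow> nat" where
  "ealm s = (if maxst s \<noteq> length s then s ! (maxst s + 1 - 1) else 0)"

definition rmin_positions :: "nat list \<Rightarrow> nat list" where
  "rmin_positions s = filter (\<lambda>i. \<forall>j. i < j \<and> j \<le> length s \<longrightarrow> s ! (i - 1) < s ! (j - 1)) [1..<length s + 1]"

definition rmin :: "nat list \<Rightarrow> nat" where
  "rmin s = length (rmin_positions s)"

definition Prm :: "nat list \<Rightarrow> nat \<Rightarrow> nat" where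
  "Prm s m = rmin_positions s ! m"

definition Rmin :: "nat list \<Rightarrow> nat \<Rightarrow> nat" where
  "Rmin s m = s ! (Prm s m - 1)"

definition occs :: "nat list \<Rightarrow> nat \<Rightarrow> nat set" where
  "occs s v = {i. 1 \<le> i \<and> i \<le> length s \<and> s ! (i - 1) = v}"

definition rightmost_occ :: "nat list \<Rightarrow> nat \<Rightarrow> nat" where
  "rightmost_occ s v = Max (occs s v)"

definition second_rightmost_occ :: "nat list \<Rightarrow> nat \<Rightarrow> nat" where
  "second_rightmost_occ s v = Max (occs s v - {Max (occs s v)})"

definition rpos :: "nat list \<Rightarrow> nat" where
  "rpos s = (if rmin s = length s then 0
     else Max (insert 0 {m. m < rmin s \<and>
        2 \<le> card {i \<in> occs s (Rmin s m). m = 0 \<or> Prm s (m - 1) < i}}))"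

text \<open>smallest entry strictly between the two rightmost occurrences of Rmin_{rpos};
  0 if they are adjacent (or, by convention, if there are fewer than two occurrences).\<close>
definition sebr :: "nat list \<Rightarrow> nat" where
  "sebr s = (let v = Rmin s (rpos s); a = second_rightmost_occ s v; b = rightmost_occ s v in
     if card (occs s v) < 2 \<or> b = a + 1 then 0
     else Min {s ! (i - 1) | i. a < i \<and> i < b})"

definition adjacent :: "nat \<Rightarrow> nat \<Rightarrow> bool" where
  "adjacent i j \<longleftrightarrow> i + 1 = j \<or> j + 1 = i"

text \<open>The set T_{5,2}. The comparison sebr >= Rmin_{rpos+1} is regarded false when
  rpos = rmin - 1 (i.e. sebr < Rmin_{rpos+1} regarded true).\<close>
definition T52 :: "nat list set" where
  "T52 = {s \<in> ascseqs_star.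
     length s \<noteq> rmin s + 1 \<and> sebr s \<noteq> 0 \<and>
     (rpos s + 1 < rmin s \<and> sebr s \<ge> Rmin s (rpos s + 1)) \<and>
     Prm s (rpos s + 1) \<noteq> Prm s (rpos s) + 1}"

definition target52 :: "nat \<Rightarrow> nat list set" where
  "target52 n = {s \<in> ascseqs n.
     rpos s \<noteq> 0 \<and>
     \<not> adjacent (rightmost_occ s (Rmin s (rpos s - 1))) (second_rightmost_occ s (Rmin s (rpos s))) \<and>
     \<not> adjacent (second_rightmost_occ s (Rmin s (rpos s))) (rightmost_occ s (Rmin s (rpos s)))}"

definition chi :: "bool \<Rightarrow> nat" where
  "chi P = (if P then 1 else 0)"

end

theory Submission
  imports Defs
begin

(* f52 raises the rightmost occurrence y of v = Rmin_rpos to u = Rmin_(rpos+1); g52 lowers the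
   second rightmost occurrence of Rmin_rpos back to Rmin_(rpos-1). In both directions the pair
   (A, B) = (s, f52 s) has the same shape: v occurs in A at positions x < y, every entry after x
   other than the one at y is at least u, and after y the value u occurs only at k. For such pairs
   the right-to-left minima of B are those of A with y replaced by x, so rmin and all Rmin_m agree,
   the two rightmost occurrences of v in A become the two rightmost occurrences of u in B, and rpos
   goes up by exactly one. The non-adjacency conditions x + 1 < y < k - 1 shared by both sets keep
   all ascents, hence the ascent-sequence property and asc; the other statistics are read off
   directly. *)

section \<open>Right-to-left minima\<close>

abbreviation rtl_min :: "nat list \<Rightarrow> nat \<Rightarrow> bool" where
  "rtl_min s i \<equiv> \<forall>j. i < j \<and> j \<le> length s \<longrightarrow> s ! (i - 1) < s ! (j - 1)"

lemma set_rmin_positions: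
  "i \<in> set (rmin_positions s) \<longleftrightarrow> 1 \<le> i \<and> i \<le> length s \<and> rtl_min s i"
  unfolding rmin_positions_def by auto

lemma sorted_rmin_positions: "sorted_wrt (<) (rmin_positions s)"
  unfolding rmin_positions_def by (rule sorted_wrt_filter, rule sorted_wrt_upt)

lemma Prm_in_rmin_positions: "m < rmin s \<Longrightarrow> Prm s m \<in> set (rmin_positions s)"
  unfolding Prm_def rmin_def by simp

lemma Prm_bounds: "m < rmin s \<Longrightarrow> 1 \<le> Prm s m \<and> Prm s m \<le> length s"
  using Prm_in_rmin_positions set_rmin_positions by blast

lemma rtl_min_Prm: "m < rmin s \<Longrightarrow> rtl_min s (Prm s m)"
  using Prm_in_rmin_positions set_rmin_positions by blast

lemma rmin_positions_Prm: "i \<in> set (rmin_positions s) \<Longrightarrow> \<exists>m < rmin s. Prm s m = i"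
  unfolding Prm_def rmin_def by (metis in_set_conv_nth)

lemma Prm_strict_mono: "m < m' \<Longrightarrow> m' < rmin s \<Longrightarrow> Prm s m < Prm s m'"
  using sorted_rmin_positions[of s] unfolding Prm_def rmin_def by (simp add: sorted_wrt_iff_nth_less)

lemma Prm_less_iff: "m < rmin s \<Longrightarrow> m' < rmin s \<Longrightarrow> Prm s m < Prm s m' \<longleftrightarrow> m < m'"
  by (metis Prm_strict_mono less_asym nat_neq_iff)

lemma Prm_eq_iff: "m < rmin s \<Longrightarrow> m' < rmin s \<Longrightarrow> Prm s m = Prm s m' \<longleftrightarrow> m = m'"
  by (metis Prm_strict_mono less_irrefl nat_neq_iff)

lemma Rmin_less_after_Prm:
  "m < rmin s \<Longrightarrow> Prm s m < j \<Longrightarrow> j \<le> length s \<Longrightarrow> Rmin s m < s ! (j - 1)"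
  using rtl_min_Prm[of m s] unfolding Rmin_def by blast

lemma Rmin_strict_mono: "m < m' \<Longrightarrow> m' < rmin s \<Longrightarrow> Rmin s m < Rmin s m'"
  using Rmin_less_after_Prm[of m s "Prm s m'"] Prm_strict_mono[of m m' s] Prm_bounds[of m' s]
  unfolding Rmin_def by auto

lemma Rmin_mono: "m \<le> m' \<Longrightarrow> m' < rmin s \<Longrightarrow> Rmin s m \<le> Rmin s m'"
  using Rmin_strict_mono[of m m' s] by (cases "m = m'") auto

text \<open>The last occurrence of the minimum of a suffix is a right-to-left minimum.\<close>
lemma Rmin_le_suffix:
  assumes "1 \<le> j" "j \<le> length s"
  shows "\<exists>m < rmin s. j \<le> Prm s m \<and> Rmin s m \<le> s ! (j - 1)"
proof -
  define I where "I = {j..length s}"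
  define mv where "mv = Min ((\<lambda>l. s ! (l - 1)) ` I)"
  define k where "k = Max {l \<in> I. s ! (l - 1) = mv}"
  have I: "finite I" "I \<noteq> {}" using assms unfolding I_def by auto
  have mv_le: "\<And>l. l \<in> I \<Longrightarrow> mv \<le> s ! (l - 1)" unfolding mv_def using I by simp
  have "mv \<in> (\<lambda>l. s ! (l - 1)) ` I" unfolding mv_def using I by simp
  then have k: "k \<in> I" "s ! (k - 1) = mv"
    using Max_in[of "{l \<in> I. s ! (l - 1) = mv}"] I unfolding k_def by auto
  have k_max: "\<And>l. l \<in> I \<Longrightarrow> s ! (l - 1) = mv \<Longrightarrow> l \<le> k" unfolding k_def using I by auto
  have "rtl_min s k"
  proof (intro allI impI)
    fix l assume l: "k < l \<and> l \<le> length s"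
    then have "l \<in> I" using k unfolding I_def by auto
    have "mv \<le> s ! (l - 1)" using mv_le \<open>l \<in> I\<close> by blast
    moreover have "s ! (l - 1) \<noteq> mv" using k_max[OF \<open>l \<in> I\<close>] l leD by blast
    ultimately show "s ! (k - 1) < s ! (l - 1)" using k(2) by simp
  qed
  then have "k \<in> set (rmin_positions s)" using k assms unfolding set_rmin_positions I_def by auto
  then obtain m where m: "m < rmin s" "Prm s m = k" using rmin_positions_Prm by blast
  have "j \<le> k" using k(1) unfolding I_def by simp
  moreover have "Rmin s m \<le> s ! (j - 1)"
    using k(2) mv_le[of j] assms m(2) unfolding Rmin_def I_def by simp
  ultimately show ?thesis using m by blast
qed

lemma Rmin_Suc_le_after_Prm:
  assumes "Suc m < rmin s" "Prm s m < j" "j \<le> length s"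
  shows "Rmin s (Suc m) \<le> s ! (j - 1)"
proof -
  obtain m' where m': "m' < rmin s" "j \<le> Prm s m'" "Rmin s m' \<le> s ! (j - 1)"
    using Rmin_le_suffix[of j s] assms by auto
  have "m < m'" using Prm_less_iff[of m s m'] m' assms by auto
  then show ?thesis using Rmin_mono[of "Suc m" m' s] m' by auto
qed

lemma rmin_less_length:
  assumes "1 \<le> i" "i < j" "j \<le> length s" "s ! (i - 1) = s ! (j - 1)"
  shows "rmin s < length s"
proof -
  have "\<not> rtl_min s i"
  proof
    assume "rtl_min s i"
    then have "s ! (i - 1) < s ! (j - 1)" using assms(2,3) by blast
    then show False using assms(4) by simp
  qed
  then have "rmin s < length [1..<length s + 1]" unfolding rmin_def rmin_positions_def
    by (intro length_filter_less) (use assms in \<open>auto simp del: upt_Suc\<close>)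
  then show ?thesis by (simp del: upt_Suc)
qed

lemma rmin_add_two_le_length:
  assumes "1 \<le> i" "i \<le> length s" "1 \<le> j" "j \<le> length s" "i \<noteq> j"
    and "\<not> rtl_min s i" "\<not> rtl_min s j"
  shows "rmin s + 2 \<le> length s"
proof -
  let ?xs = "[1..<length s + 1]"
  have "length (filter (rtl_min s) ?xs) + length (filter (\<lambda>l. \<not> rtl_min s l) ?xs) = length ?xs"
    by (rule sum_length_filter_compl)
  moreover have sub: "{i, j} \<subseteq> set (filter (\<lambda>l. \<not> rtl_min s l) ?xs)"
  proof -
    have "i \<in> set ?xs" "j \<in> set ?xs" using assms by (simp_all only: set_upt) auto
    then show ?thesis using assms(6,7) by (simp only: set_filter) blast
  qed
  have "card {i, j} = 2" using assms(5) by simp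
  then have "2 \<le> card (set (filter (\<lambda>l. \<not> rtl_min s l) ?xs))"
    using card_mono[OF List.finite_set sub] by linarith
  then have "2 \<le> length (filter (\<lambda>l. \<not> rtl_min s l) ?xs)"
    using card_length order_trans by blast
  ultimately show ?thesis unfolding rmin_def rmin_positions_def by (simp only: length_upt)
qed

section \<open>Occurrences\<close>

lemma finite_occs: "finite (occs s v)"
  unfolding occs_def by auto

lemma two_le_card: "finite S \<Longrightarrow> i \<in> S \<Longrightarrow> j \<in> S \<Longrightarrow> i \<noteq> j \<Longrightarrow> 2 \<le> card S"
  using card_mono[of S "{i, j}"] by auto

lemma rightmost_occ_eqI:
  "y \<in> occs s v \<Longrightarrow> (\<And>i. i \<in> occs s v \<Longrightarrow> i \<le> y) \<Longrightarrow> rightmost_occ s v = y"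
  unfolding rightmost_occ_def by (rule Max_eqI[OF finite_occs])

lemma rightmost_occs_eqI:
  assumes "x \<in> occs s v" "y \<in> occs s v" "x < y" "\<And>i. i \<in> occs s v \<Longrightarrow> x < i \<Longrightarrow> i = y"
  shows "rightmost_occ s v = y" "second_rightmost_occ s v = x"
proof -
  have le: "i \<le> x" if "i \<in> occs s v" "i \<noteq> y" for i
    using assms(4)[OF that(1)] that(2) by (cases "x < i") auto
  show y: "rightmost_occ s v = y"
    using assms(2,3) le by (intro rightmost_occ_eqI) fastforce+
  show "second_rightmost_occ s v = x"
    unfolding second_rightmost_occ_def y[unfolded rightmost_occ_def]
    using assms(1,3) le finite_occs by (intro Max_eqI) auto
qed

lemma second_rightmost_occ:
  assumes "2 \<le> card (occs s v)"
  shows "second_rightmost_occ s v \<in> occs s v" "second_rightmost_occ s v < rightmost_occ s v"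
    "\<And>i. i \<in> occs s v \<Longrightarrow> second_rightmost_occ s v < i \<Longrightarrow> i = rightmost_occ s v"
proof -
  let ?O = "occs s v"
  have "?O - {Max ?O} \<noteq> {}"
  proof
    assume "?O - {Max ?O} = {}"
    then have "card ?O \<le> 1" using card_mono[of "{Max ?O}" ?O] by fastforce
    then show False using assms by simp
  qed
  then have S: "Max (?O - {Max ?O}) \<in> ?O - {Max ?O}" using finite_occs by (intro Max_in) auto
  moreover have "Max (?O - {Max ?O}) \<le> Max ?O" using S finite_occs by simp
  ultimately show "second_rightmost_occ s v \<in> ?O" "second_rightmost_occ s v < rightmost_occ s v"
    unfolding second_rightmost_occ_def rightmost_occ_def by auto
  fix i assume "i \<in> ?O" "second_rightmost_occ s v < i"
  moreover have "i \<in> ?O - {Max ?O} \<Longrightarrow> i \<le> Max (?O - {Max ?O})" using finite_occs by simp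
  ultimately show "i = rightmost_occ s v"
    unfolding second_rightmost_occ_def rightmost_occ_def by force
qed

lemma second_rightmost_occ_gt:
  assumes "2 \<le> card {i \<in> occs s v. x < i}"
  shows "2 \<le> card (occs s v)" "x < second_rightmost_occ s v"
proof -
  have "card {i \<in> occs s v. x < i} \<le> card (occs s v)" by (rule card_mono) (auto simp: finite_occs)
  then show two: "2 \<le> card (occs s v)" using assms by simp
  obtain i where i: "i \<in> occs s v" "x < i" "i \<noteq> rightmost_occ s v"
  proof -
    have "\<not> {i \<in> occs s v. x < i} \<subseteq> {rightmost_occ s v}"
    proof
      assume "{i \<in> occs s v. x < i} \<subseteq> {rightmost_occ s v}"
      then have "card {i \<in> occs s v. x < i} \<le> card {rightmost_occ s v}" by (intro card_mono) auto
      then show False using assms by simp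
    qed
    then show ?thesis using that by blast
  qed
  then show "x < second_rightmost_occ s v"
    using second_rightmost_occ(3)[OF two i(1)] by fastforce
qed

lemma rightmost_occ_Rmin:
  assumes "m < rmin s"
  shows "rightmost_occ s (Rmin s m) = Prm s m"
proof (rule rightmost_occ_eqI)
  show "Prm s m \<in> occs s (Rmin s m)" using Prm_bounds[OF assms] unfolding occs_def Rmin_def by auto
  fix i assume "i \<in> occs s (Rmin s m)"
  then show "i \<le> Prm s m" using Rmin_less_after_Prm[OF assms, of i] unfolding occs_def
    by (metis (mono_tags, lifting) less_irrefl mem_Collect_eq not_le)
qed

lemma sebr_nonzero:
  assumes "sebr s \<noteq> 0"
  shows "2 \<le> card (occs s (Rmin s (rpos s)))"
    and "second_rightmost_occ s (Rmin s (rpos s)) + 1 < rightmost_occ s (Rmin s (rpos s))"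
    and "\<And>j. second_rightmost_occ s (Rmin s (rpos s)) < j \<Longrightarrow> j < rightmost_occ s (Rmin s (rpos s))
      \<Longrightarrow> sebr s \<le> s ! (j - 1)"
proof -
  let ?v = "Rmin s (rpos s)"
  let ?a = "second_rightmost_occ s ?v" and ?b = "rightmost_occ s ?v"
  have nonadjacent: "\<not> (card (occs s ?v) < 2 \<or> ?b = ?a + 1)"
    and sebr: "sebr s = Min {s ! (i - 1) | i. ?a < i \<and> i < ?b}"
    using assms unfolding sebr_def Let_def by (auto split: if_splits)
  then show two: "2 \<le> card (occs s ?v)" by simp
  show "?a + 1 < ?b" using second_rightmost_occ(2)[OF two] nonadjacent by simp
  fix j assume "?a < j" "j < ?b"
  then show "sebr s \<le> s ! (j - 1)" unfolding sebr by (intro Min_le) (auto intro: finite_image_set)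
qed

section \<open>The statistic rpos\<close>

definition repeated_rmin :: "nat list \<Rightarrow> nat \<Rightarrow> bool" where
  "repeated_rmin s m \<longleftrightarrow> 2 \<le> card {i \<in> occs s (Rmin s m). m = 0 \<or> Prm s (m - 1) < i}"

lemma rpos_eq_Max:
  "rmin s \<noteq> length s \<Longrightarrow> rpos s = Max (insert 0 {m. m < rmin s \<and> repeated_rmin s m})"
  unfolding rpos_def repeated_rmin_def by simp

lemma le_rpos: "rmin s \<noteq> length s \<Longrightarrow> m < rmin s \<Longrightarrow> repeated_rmin s m \<Longrightarrow> m \<le> rpos s"
  unfolding rpos_eq_Max by (rule Max_ge) auto

lemma rpos_eq_iff:
  assumes "rmin s \<noteq> length s" "p < rmin s" "repeated_rmin s p"
  shows "rpos s = p \<longleftrightarrow> (\<forall>m. p < m \<longrightarrow> m < rmin s \<longrightarrow> \<not> repeated_rmin s m)"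
proof
  assume "rpos s = p"
  then show "\<forall>m. p < m \<longrightarrow> m < rmin s \<longrightarrow> \<not> repeated_rmin s m"
    using le_rpos[OF assms(1)] by fastforce
next
  assume "\<forall>m. p < m \<longrightarrow> m < rmin s \<longrightarrow> \<not> repeated_rmin s m"
  then have "m \<le> p" if "m \<in> insert 0 {m. m < rmin s \<and> repeated_rmin s m}" for m
    using that by (cases "p < m") auto
  then show "rpos s = p" unfolding rpos_eq_Max[OF assms(1)]
    using assms by (intro Max_eqI) auto
qed

lemma rpos_nonzero:
  assumes "rpos s \<noteq> 0"
  shows "rmin s \<noteq> length s" "rpos s < rmin s" "repeated_rmin s (rpos s)"
proof -
  show rl: "rmin s \<noteq> length s" using assms unfolding rpos_def by auto
  have "rpos s \<in> insert 0 {m. m < rmin s \<and> repeated_rmin s m}"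
    unfolding rpos_eq_Max[OF rl] by (rule Max_in) auto
  then show "rpos s < rmin s" "repeated_rmin s (rpos s)" using assms by auto
qed

lemma Rmin_Suc_occurs_once:
  assumes "\<not> repeated_rmin s (Suc p)" "Suc p < rmin s"
    and "Prm s p < j" "j \<le> length s" "s ! (j - 1) = Rmin s (Suc p)"
  shows "j = Prm s (Suc p)"
proof (rule ccontr)
  assume "j \<noteq> Prm s (Suc p)"
  moreover have "Prm s p < Prm s (Suc p)" "1 \<le> Prm s (Suc p)" "Prm s (Suc p) \<le> length s"
    using Prm_strict_mono[of p "Suc p" s] Prm_bounds[of "Suc p" s] assms(2) by auto
  ultimately have "repeated_rmin s (Suc p)"
    unfolding repeated_rmin_def using assms(3-5)
    by (intro two_le_card[of _ j "Prm s (Suc p)"]) (auto simp: occs_def finite_occs Rmin_def)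
  then show False using assms(1) by simp
qed

lemma second_rightmost_occ_Rmin_rpos:
  assumes "rpos s \<noteq> 0"
  defines "y \<equiv> second_rightmost_occ s (Rmin s (rpos s))"
  shows "Prm s (rpos s - 1) < y" "y < Prm s (rpos s)" "s ! (y - 1) = Rmin s (rpos s)"
    and "\<And>j. y < j \<Longrightarrow> j \<le> length s \<Longrightarrow> s ! (j - 1) = Rmin s (rpos s) \<Longrightarrow> j = Prm s (rpos s)"
proof -
  have "2 \<le> card {i \<in> occs s (Rmin s (rpos s)). Prm s (rpos s - 1) < i}"
    using rpos_nonzero(3)[OF assms(1)] assms(1) unfolding repeated_rmin_def by simp
  note y = second_rightmost_occ_gt[OF this, folded y_def]
  have last: "rightmost_occ s (Rmin s (rpos s)) = Prm s (rpos s)"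
    using rightmost_occ_Rmin rpos_nonzero(2)[OF assms(1)] .
  show "Prm s (rpos s - 1) < y" by (rule y(2))
  show "y < Prm s (rpos s)" "s ! (y - 1) = Rmin s (rpos s)"
    using second_rightmost_occ(1,2)[OF y(1)] last unfolding y_def occs_def by auto
  show "j = Prm s (rpos s)" if "y < j" "j \<le> length s" "s ! (j - 1) = Rmin s (rpos s)" for j
    using second_rightmost_occ(3)[OF y(1), of j] that last unfolding y_def occs_def by auto
qed

section \<open>Ascent sequences\<close>

lemma asc_take: "asc (take i s) = card {k. k + 1 < min i (length s) \<and> s ! k < s ! (k + 1)}"
  unfolding asc_def by (rule arg_cong[where f=card]) auto

lemma asc_take_mono: "i \<le> j \<Longrightarrow> asc (take i s) \<le> asc (take j s)"
  unfolding asc_take by (rule card_mono) (rule finite_subset[of _ "{..<length s}"], auto)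

lemma asc_le_length: "asc s \<le> length s - 1"
proof -
  have "{i. i + 1 < length s \<and> s ! i < s ! (i + 1)} \<subseteq> {..<length s - 1}" by auto
  then show ?thesis unfolding asc_def using card_mono[of "{..<length s - 1}"] by fastforce
qed

lemma ascent_seq_nth_le: "is_ascent_seq s \<Longrightarrow> k < length s \<Longrightarrow> s ! k \<le> k"
proof -
  assume s: "is_ascent_seq s" "k < length s"
  show ?thesis
  proof (cases "k = 0")
    case True then show ?thesis using s unfolding is_ascent_seq_def by auto
  next
    case False
    then have "s ! k \<le> asc (take k s) + 1" using s unfolding is_ascent_seq_def by auto
    moreover have "asc (take k s) \<le> k - 1" using asc_le_length[of "take k s"] s by auto
    ultimately show ?thesis using False by linarith
  qed
qed

lemma ascent_seq_fixed_point_prefix: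
  assumes s: "is_ascent_seq s" and i: "i \<le> length s" "1 \<le> j" "j \<le> i" and si: "s ! (i - 1) = i - 1"
  shows "s ! (j - 1) = j - 1"
proof (cases "i = 1")
  case True
  have "0 < length s" using True i(1) by linarith
  then show ?thesis using True i ascent_seq_nth_le[OF s, of 0] by simp
next
  case False
  then have i2: "2 \<le> i" using i by auto
  have "i - 1 < length s" "i - 1 \<noteq> 0" using i i2 by auto
  then have "s ! (i - 1) \<le> asc (take (i - 1) s) + 1" using s unfolding is_ascent_seq_def by auto
  \<comment> \<open>the bound s ! (i - 1) \<le> asc + 1 is attained, so every step before i - 1 is an ascent\<close>
  then have "i - 2 \<le> asc (take (i - 1) s)" using si i2 by linarith
  moreover let ?S = "{k. k + 1 < min (i - 1) (length s) \<and> s ! k < s ! (k + 1)}"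
  have sub: "?S \<subseteq> {..<i - 2}" using i2 by auto
  ultimately have "card ?S = i - 2" using asc_take[of "i - 1" s] card_mono[OF _ sub] by simp
  then have "?S = {..<i - 2}" using sub by (intro card_subset_eq) auto
  then have ascent: "\<And>k. k < i - 2 \<Longrightarrow> s ! k < s ! (k + 1)" by blast
  have "k \<le> s ! k" if "k \<le> i - 2" for k
    using that
  proof (induction k)
    case (Suc k)
    then show ?case using ascent[of k] by simp
  qed simp
  moreover have "s ! k \<le> k" if "k \<le> i - 2" for k
  proof -
    have "k < length s" using that i i2 by linarith
    then show ?thesis using ascent_seq_nth_le[OF s] by blast
  qed
  ultimately have "s ! k = k" if "k \<le> i - 2" for k using that le_antisym by blast
  then show ?thesis using si i by (cases "j = i") auto
qed

lemma maxst_fixed_points: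
  assumes "is_ascent_seq s"
  shows "{i. 1 \<le> i \<and> i \<le> length s \<and> s ! (i - 1) = i - 1} = {1..maxst s}"
proof -
  let ?S = "{i. 1 \<le> i \<and> i \<le> length s \<and> s ! (i - 1) = i - 1}"
  have fin: "finite ?S" by auto
  show ?thesis
  proof (cases "?S = {}")
    case True then show ?thesis unfolding maxst_def by auto
  next
    case False
    define M where "M = Max ?S"
    have M: "M \<in> ?S" unfolding M_def using fin False by (rule Max_in)
    have "?S = {1..M}"
    proof
      show "?S \<subseteq> {1..M}" unfolding M_def using fin by auto
      show "{1..M} \<subseteq> ?S" using ascent_seq_fixed_point_prefix[OF assms, of M] M by auto
    qed
    then show ?thesis unfolding maxst_def by simp
  qed
qed

lemma Rmin_0:
  assumes "is_ascent_seq s" "s \<noteq> []"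
  shows "0 < rmin s" "Rmin s 0 = 0"
proof -
  obtain m where m: "m < rmin s" "Rmin s m \<le> s ! 0"
    using Rmin_le_suffix[of 1 s] assms(2) by (auto simp: Suc_le_eq)
  have "s ! 0 = 0" using ascent_seq_nth_le[OF assms(1), of 0] assms(2) by auto
  then show "0 < rmin s" "Rmin s 0 = 0" using m Rmin_mono[of 0 m s] by auto
qed

section \<open>Raising an occurrence to the next right-to-left minimum\<close>

lemma upt_split_at_two:
  assumes "1 \<le> x" "x < y" "y \<le> L"
  shows "[1..<L+1] = [1..<x] @ x # [x+1..<y] @ y # [y+1..<L+1]"
proof -
  have "[1..<L+1] = [1..<x] @ [x..<L+1]" using assms upt_add_eq_append[of 1 x "L+1-x"] by simp
  also have "[x..<L+1] = x # [x+1..<L+1]" using assms upt_conv_Cons by simp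
  also have "[x+1..<L+1] = [x+1..<y] @ [y..<L+1]"
    using assms upt_add_eq_append[of "x+1" y "L+1-y"] by simp
  also have "[y..<L+1] = y # [y+1..<L+1]" using assms upt_conv_Cons by simp
  finally show ?thesis by simp
qed

lemma filter_upt_exchange:
  assumes xy: "1 \<le> x" "x < y" "y \<le> L"
    and before: "\<And>i. 1 \<le> i \<Longrightarrow> i < x \<Longrightarrow> Q i = P i"
    and after: "\<And>i. y < i \<Longrightarrow> Q i = P i"
    and between: "\<And>i. x < i \<Longrightarrow> i < y \<Longrightarrow> \<not> P i \<and> \<not> Q i"
    and ends: "\<not> P x" "P y" "Q x" "\<not> Q y"
  shows "\<exists>F1 F2. filter P [1..<L+1] = F1 @ y # F2 \<and> filter Q [1..<L+1] = F1 @ x # F2"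
proof (intro exI conjI)
  have "filter Q [1..<x] = filter P [1..<x]" "filter Q [y+1..<L+1] = filter P [y+1..<L+1]"
    using before after by (auto intro: filter_cong)
  moreover have "filter P [x+1..<y] = []" "filter Q [x+1..<y] = []"
    using between by (auto simp: filter_empty_conv)
  ultimately show "filter P [1..<L+1] = filter P [1..<x] @ y # filter P [y+1..<L+1]"
    "filter Q [1..<L+1] = filter P [1..<x] @ x # filter P [y+1..<L+1]"
    unfolding upt_split_at_two[OF xy] using ends by simp_all
qed

locale exchange =
  fixes A B :: "nat list" and x y k v u :: nat
  assumes B_def: "B = A[y - 1 := u]"
    and positions: "1 \<le> x" "x < y" "y < k" "k \<le> length A"
    and A_x: "A ! (x - 1) = v" and A_y: "A ! (y - 1) = v" and A_k: "A ! (k - 1) = u"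
    and v_less_u: "v < u"
    and large_after_x: "\<And>j. x < j \<Longrightarrow> j \<le> length A \<Longrightarrow> j \<noteq> y \<Longrightarrow> u \<le> A ! (j - 1)"
    and unique_after_y: "\<And>j. y < j \<Longrightarrow> j \<le> length A \<Longrightarrow> A ! (j - 1) = u \<Longrightarrow> j = k"
begin

lemma length_B: "length B = length A"
  unfolding B_def by simp

lemma B_nth: "j \<noteq> y \<Longrightarrow> 1 \<le> j \<Longrightarrow> B ! (j - 1) = A ! (j - 1)"
  unfolding B_def using positions by simp

lemma B_y: "B ! (y - 1) = u"
  unfolding B_def using positions by simp

lemma A_eq: "A = B[y - 1 := v]"
  unfolding B_def using A_y by (metis list_update_id list_update_overwrite)

lemma rtl_min_before_x:
  assumes "1 \<le> i" "i < x"
  shows "rtl_min B i \<longleftrightarrow> rtl_min A i"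
proof
  assume B: "rtl_min B i"
  show "rtl_min A i"
  proof (intro allI impI)
    fix j assume j: "i < j \<and> j \<le> length A"
    have "B ! (i - 1) < B ! (x - 1)" using B assms positions length_B by auto
    then have "A ! (i - 1) < v" using B_nth[of i] B_nth[of x] assms positions A_x by auto
    then show "A ! (i - 1) < A ! (j - 1)"
      using B j B_nth[of i] B_nth[of j] assms positions A_y length_B by (cases "j = y") auto
  qed
next
  assume A: "rtl_min A i"
  show "rtl_min B i"
  proof (intro allI impI)
    fix j assume j: "i < j \<and> j \<le> length B"
    have "A ! (i - 1) < A ! (y - 1)" using A assms positions by auto
    then show "B ! (i - 1) < B ! (j - 1)"
      using A j B_nth[of i] B_nth[of j] assms positions A_y B_y length_B v_less_u
      by (cases "j = y") auto
  qed
qed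

lemma rtl_min_after_y:
  assumes "y < i"
  shows "rtl_min B i \<longleftrightarrow> rtl_min A i"
proof -
  have "B ! (j - 1) = A ! (j - 1)" if "i \<le> j" for j using B_nth that assms positions by simp
  then show ?thesis using length_B by auto
qed

lemma not_rtl_min_between:
  assumes "x < i" "i < y"
  shows "\<not> rtl_min A i" "\<not> rtl_min B i"
proof -
  have "u \<le> A ! (i - 1)" "u \<le> B ! (i - 1)"
    using large_after_x[of i] B_nth[of i] assms positions by auto
  moreover have "i < k" "k \<le> length B" "B ! (k - 1) = u"
    using A_k B_nth[of k] assms positions length_B by auto
  ultimately show "\<not> rtl_min A i" "\<not> rtl_min B i" using A_k positions by (auto dest!: spec[of _ k])
qed

lemma rtl_min_x_y: "\<not> rtl_min A x" "rtl_min A y" "rtl_min B x" "\<not> rtl_min B y"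
proof -
  show "\<not> rtl_min A x" using A_x A_y positions by auto
  show "rtl_min A y"
  proof (intro allI impI)
    fix j assume "y < j \<and> j \<le> length A"
    then show "A ! (y - 1) < A ! (j - 1)"
      using large_after_x[of j] positions A_y v_less_u by auto
  qed
  show "\<not> rtl_min B y" using B_y B_nth[of k] A_k positions length_B by auto
  show "rtl_min B x"
  proof (intro allI impI)
    fix j assume j: "x < j \<and> j \<le> length B"
    then show "B ! (x - 1) < B ! (j - 1)"
      using B_nth[of x] B_nth[of j] B_y large_after_x[of j] A_x positions v_less_u length_B
      by (cases "j = y") auto
  qed
qed

lemma rmin_positions_exchange:
  obtains F1 F2 where "rmin_positions A = F1 @ y # F2" "rmin_positions B = F1 @ x # F2"
proof -
  have "\<exists>F1 F2. filter (rtl_min A) [1..<length A + 1] = F1 @ y # F2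
      \<and> filter (rtl_min B) [1..<length A + 1] = F1 @ x # F2"
    using positions rtl_min_before_x rtl_min_after_y not_rtl_min_between rtl_min_x_y
    by (intro filter_upt_exchange) auto
  then show ?thesis using that unfolding rmin_positions_def length_B by blast
qed

lemma rmin_B: "rmin B = rmin A"
  by (rule rmin_positions_exchange) (simp add: rmin_def)

lemma Prm_B_iff:
  assumes "m < rmin A"
  shows "Prm B m = x \<longleftrightarrow> Prm A m = y"
proof -
  obtain F1 F2 where F: "rmin_positions A = F1 @ y # F2" "rmin_positions B = F1 @ x # F2"
    by (rule rmin_positions_exchange)
  have "length F1 < rmin A" "Prm A (length F1) = y" "Prm B (length F1) = x"
    using F unfolding rmin_def Prm_def by simp_all
  then show ?thesis using Prm_eq_iff[of m A "length F1"] Prm_eq_iff[of m B "length F1"] assms rmin_B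
    by auto
qed

lemma Prm_B_eq:
  assumes "m < rmin A" "Prm A m \<noteq> y"
  shows "Prm B m = Prm A m"
proof -
  obtain F1 F2 where F: "rmin_positions A = F1 @ y # F2" "rmin_positions B = F1 @ x # F2"
    by (rule rmin_positions_exchange)
  then have "m \<noteq> length F1" using assms(2) unfolding Prm_def by auto
  then show ?thesis using F unfolding Prm_def by (auto simp: nth_append nth_Cons split: nat.splits)
qed

lemma Rmin_B: "m < rmin A \<Longrightarrow> Rmin B m = Rmin A m"
  using Prm_B_iff[of m] Prm_B_eq[of m] B_nth[of x] B_nth[of "Prm A m"] Prm_bounds[of m A]
    positions A_x A_y unfolding Rmin_def by (cases "Prm A m = y") auto

lemma occs_A_v: "rightmost_occ A v = y" "second_rightmost_occ A v = x"
proof -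
  have "i = y" if "i \<in> occs A v" "x < i" for i
    using that large_after_x[of i] v_less_u by (force simp: occs_def)
  moreover have "x \<in> occs A v" "y \<in> occs A v"
    using positions A_x A_y by (auto simp: occs_def)
  ultimately show "rightmost_occ A v = y" "second_rightmost_occ A v = x"
    using rightmost_occs_eqI[of x A v y] positions by blast+
qed

lemma two_le_card_occs_A_v: "2 \<le> card (occs A v)"
  using positions A_x A_y by (intro two_le_card[of _ x y]) (auto simp: occs_def finite_occs)

lemma rightmost_occ_A_u: "rightmost_occ A u = k"
proof (rule rightmost_occ_eqI)
  show "k \<in> occs A u" using positions A_k by (simp add: occs_def)
  fix i assume "i \<in> occs A u"
  then show "i \<le> k" using unique_after_y[of i] positions by (cases "y < i") (auto simp: occs_def)
qed

lemma occs_B_u: "rightmost_occ B u = k" "second_rightmost_occ B u = y"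
proof -
  have "i = k" if "i \<in> occs B u" "y < i" for i
    using that unique_after_y[of i] B_nth[of i] length_B by (auto simp: occs_def)
  moreover have "y \<in> occs B u" "k \<in> occs B u"
    using positions A_k B_y B_nth[of k] length_B by (auto simp: occs_def)
  ultimately show "rightmost_occ B u = k" "second_rightmost_occ B u = y"
    using rightmost_occs_eqI[of y B u k] positions by blast+
qed

lemma rightmost_occ_B_v: "rightmost_occ B v = x"
proof (rule rightmost_occ_eqI)
  show "x \<in> occs B v" using positions A_x B_nth[of x] length_B by (auto simp: occs_def)
  fix i assume i: "i \<in> occs B v"
  show "i \<le> x"
  proof (rule ccontr)
    assume "\<not> i \<le> x"
    then have "u \<le> B ! (i - 1)"
      using B_y B_nth[of i] large_after_x[of i] i length_B by (cases "i = y") (auto simp: occs_def)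
    then show False using i v_less_u by (simp add: occs_def)
  qed
qed

lemma Prm_Suc:
  assumes "p < rmin A" "Prm A p = y"
  shows "Suc p < rmin A" "Rmin A (Suc p) = u" "Prm A (Suc p) = k"
proof -
  have "rtl_min A k"
  proof (intro allI impI)
    fix j assume "k < j \<and> j \<le> length A"
    then show "A ! (k - 1) < A ! (j - 1)"
      using large_after_x[of j] unique_after_y[of j] positions A_k by fastforce
  qed
  then have "k \<in> set (rmin_positions A)" unfolding set_rmin_positions using positions by simp
  then obtain m where m: "m < rmin A" "Prm A m = k" using rmin_positions_Prm by blast
  then have "p < m" using Prm_less_iff[of p A m] assms positions by auto
  then show Suc: "Suc p < rmin A" using m by simp
  have "Rmin A (Suc p) \<le> u" using Rmin_mono[of "Suc p" m A] \<open>p < m\<close> m A_k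
    unfolding Rmin_def by simp
  moreover have "y < Prm A (Suc p)" using Prm_strict_mono[OF _ Suc, of p] assms by simp
  then have "u \<le> Rmin A (Suc p)"
    using large_after_x[of "Prm A (Suc p)"] Prm_bounds[OF Suc] positions unfolding Rmin_def by simp
  ultimately show "Rmin A (Suc p) = u" by simp
  then show "Prm A (Suc p) = k" using rightmost_occ_Rmin[OF Suc] rightmost_occ_A_u by simp
qed

lemma rpos_exchange:
  assumes p: "p < rmin A" "Prm A p = y"
  shows "rpos B = Suc p \<longleftrightarrow> rpos A = p"
proof -
  note Suc = Prm_Suc[OF p]
  have Prm_B_p: "Prm B p = x" using Prm_B_iff p by blast
  have rmin_A: "rmin A \<noteq> length A"
    using rmin_less_length[of x y A] positions A_x A_y by simp
  then have rmin_B': "rmin B \<noteq> length B" using rmin_B length_B by simp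
  have rep_A: "repeated_rmin A p"
    unfolding repeated_rmin_def
  proof (rule two_le_card[of _ x y])
    have "Prm A (p - 1) < x" if "p \<noteq> 0"
    proof -
      have "Prm A (p - 1) \<noteq> y" using Prm_eq_iff[of "p - 1" A p] p that by simp
      then have "Prm A (p - 1) = Prm B (p - 1)" using Prm_B_eq p by simp
      also have "\<dots> < x" using Prm_strict_mono[of "p - 1" p B] Prm_B_p p rmin_B that by simp
      finally show ?thesis .
    qed
    then have "p = 0 \<or> Prm A (p - 1) < x" by blast
    then show "x \<in> {i \<in> occs A (Rmin A p). p = 0 \<or> Prm A (p - 1) < i}"
      "y \<in> {i \<in> occs A (Rmin A p). p = 0 \<or> Prm A (p - 1) < i}"
      using positions A_x A_y p unfolding occs_def Rmin_def by auto
  qed (use positions finite_occs in auto)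
  have not_rep_A: "\<not> repeated_rmin A (Suc p)"
  proof -
    let ?S = "{i \<in> occs A (Rmin A (Suc p)). Suc p = 0 \<or> Prm A (Suc p - 1) < i}"
    have "?S \<subseteq> {k}"
    proof
      fix i assume "i \<in> ?S"
      then have "y < i" "i \<le> length A" "A ! (i - 1) = u" using Suc(2) p(2) by (auto simp: occs_def)
      then show "i \<in> {k}" using unique_after_y by simp
    qed
    then have "card ?S \<le> card {k}" by (intro card_mono) auto
    then show ?thesis unfolding repeated_rmin_def by simp
  qed
  have rep_B: "repeated_rmin B (Suc p)"
    unfolding repeated_rmin_def
    using positions B_y B_nth[of k] A_k Suc Rmin_B Prm_B_p length_B
    by (intro two_le_card[of _ y k]) (auto simp: occs_def finite_occs)
  have same: "repeated_rmin B m \<longleftrightarrow> repeated_rmin A m" if "Suc p < m" "m < rmin A" for m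
  proof -
    have "Prm A (m - 1) \<noteq> y" using Prm_eq_iff[of "m - 1" A p] p that by simp
    then have "Prm B (m - 1) = Prm A (m - 1)" using Prm_B_eq that by simp
    moreover have "k \<le> Prm A (m - 1)"
    proof (cases "Suc p = m - 1")
      case True
      then show ?thesis using Suc by simp
    next
      case False
      then have "Suc p < m - 1" using that by simp
      moreover have "m - 1 < rmin A" using that by simp
      ultimately show ?thesis using Prm_strict_mono[of "Suc p" "m - 1" A] Suc by simp
    qed
    ultimately have "{i \<in> occs B (Rmin B m). Prm B (m - 1) < i}
        = {i \<in> occs A (Rmin A m). Prm A (m - 1) < i}"
      using Rmin_B[of m] that positions B_nth length_B unfolding occs_def by auto
    moreover have "m \<noteq> 0" using that by simp
    ultimately show ?thesis unfolding repeated_rmin_def by simp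
  qed
  have "rpos B = Suc p \<longleftrightarrow> (\<forall>m. Suc p < m \<longrightarrow> m < rmin A \<longrightarrow> \<not> repeated_rmin A m)"
    using rpos_eq_iff[OF rmin_B' _ rep_B] rmin_B same Suc(1) by auto
  also have "\<dots> \<longleftrightarrow> (\<forall>m. p < m \<longrightarrow> m < rmin A \<longrightarrow> \<not> repeated_rmin A m)"
    using not_rep_A by (auto simp: Suc_less_eq2 dest: Suc_lessI)
  also have "\<dots> \<longleftrightarrow> rpos A = p" using rpos_eq_iff[OF rmin_A p(1) rep_A] by simp
  finally show ?thesis .
qed

end

locale separated_exchange = exchange +
  assumes separated: "x + 1 < y" "y + 1 < k"
begin

lemma ascent_B_iff:
  assumes "j + 1 < length A"
  shows "B ! j < B ! (j + 1) \<longleftrightarrow> A ! j < A ! (j + 1)"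
proof -
  consider "j + 2 = y" | "j + 1 = y" | "j + 2 \<noteq> y" "j + 1 \<noteq> y" by linarith
  then show ?thesis
  proof cases
    case 1
    then have "u \<le> A ! j" using large_after_x[of "j + 1"] separated assms by simp
    moreover have "B ! j = A ! j" "B ! (j + 1) = u" "A ! (j + 1) = v"
      using B_nth[of "j + 1"] B_y A_y by (simp_all add: 1[symmetric])
    ultimately show ?thesis using v_less_u by simp
  next
    case 2
    then have "u \<le> A ! (j + 1)" "A ! (j + 1) \<noteq> u"
      using large_after_x[of "j + 2"] unique_after_y[of "j + 2"] separated positions assms by auto
    moreover have "B ! (j + 1) = A ! (j + 1)" "B ! j = u" "A ! j = v"
      using B_nth[of "j + 2"] B_y A_y by (simp_all add: 2[symmetric])
    ultimately show ?thesis using v_less_u by simp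
  next
    case 3
    then show ?thesis using B_nth[of "j + 1"] B_nth[of "j + 2"] by simp
  qed
qed

lemma u_le_before_y: "u \<le> A ! (y - 2)"
proof -
  have "x < y - 1" "y - 1 \<le> length A" "y - 1 \<noteq> y" using positions separated by auto
  then have "u \<le> A ! (y - 1 - 1)" using large_after_x by blast
  then show ?thesis by (simp add: numeral_2_eq_2)
qed

lemma asc_take_B: "asc (take i B) = asc (take i A)"
  unfolding asc_take length_B using ascent_B_iff by (intro arg_cong[where f=card]) auto

lemma asc_B: "asc B = asc A"
  using asc_take_B[of "length A"] length_B by simp

lemma is_ascent_seq_B: "is_ascent_seq B \<longleftrightarrow> is_ascent_seq A"
proof
  assume B: "is_ascent_seq B"
  show "is_ascent_seq A" unfolding is_ascent_seq_def
  proof (intro allI impI)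
    fix i assume i: "i < length A"
    have "B ! i \<le> (if i = 0 then 0 else asc (take i A) + 1)"
      using B i length_B asc_take_B unfolding is_ascent_seq_def by auto
    moreover have "A ! i \<le> B ! i"
      using B_nth[of "i + 1"] A_y B_y v_less_u by (cases "i = y - 1") auto
    ultimately show "A ! i \<le> (if i = 0 then 0 else asc (take i A) + 1)" by linarith
  qed
next
  assume A: "is_ascent_seq A"
  show "is_ascent_seq B" unfolding is_ascent_seq_def
  proof (intro allI impI)
    fix i assume i: "i < length B"
    show "B ! i \<le> (if i = 0 then 0 else asc (take i B) + 1)"
    proof (cases "i = y - 1")
      case False
      then show ?thesis using A i B_nth[of "i + 1"] asc_take_B length_B
        unfolding is_ascent_seq_def by auto
    next
      case True
      have y2: "y - 2 < length A" "y - 2 \<noteq> 0" "i \<noteq> 0" using True positions separated by auto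
      have "B ! i \<le> A ! (y - 2)" using u_le_before_y B_y True by simp
      also have "\<dots> \<le> asc (take (y - 2) A) + 1" using A y2 unfolding is_ascent_seq_def by auto
      also have "\<dots> \<le> asc (take i B) + 1" using asc_take_mono[of "y - 2" i A] asc_take_B True by simp
      finally show ?thesis using y2 by simp
    qed
  qed
qed

lemma set_B: "set B = set A"
proof -
  have k: "k - 1 < length A" and x: "x - 1 < length B" using positions length_B by auto
  have "u \<in> set A" using nth_mem[OF k] A_k by simp
  moreover have "v \<in> set B" using nth_mem[OF x] A_x B_nth[of x] positions by simp
  moreover have "set B \<subseteq> insert u (set A)" unfolding B_def by (rule set_update_subset_insert)
  moreover have "set A \<subseteq> insert v (set B)" unfolding A_eq by (rule set_update_subset_insert)
  ultimately show ?thesis by blast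
qed

lemma maxst_B:
  assumes "is_ascent_seq A"
  shows "maxst B = maxst A"
proof -
  have "v \<le> x - 1" using ascent_seq_nth_le[OF assms, of "x - 1"] A_x positions by simp
  moreover have "y - 2 < length A" using positions by simp
  then have "u \<le> y - 2" using ascent_seq_nth_le[OF assms, of "y - 2"] u_le_before_y by simp
  ultimately have "B ! (i - 1) = i - 1 \<longleftrightarrow> A ! (i - 1) = i - 1" if "1 \<le> i" for i
    using B_nth[OF _ that] B_y A_y positions separated by (cases "i = y") auto
  then show ?thesis unfolding maxst_def length_B by (metis (no_types, lifting))
qed

lemma rmin_add_two_le_length_A: "rmin A + 2 \<le> length A"
proof (rule rmin_add_two_le_length[of x A "x + 1"])
  have "u \<le> A ! (x + 1 - 1)" "x + 1 < k" using large_after_x[of "x + 1"] positions separated by auto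
  show "\<not> rtl_min A (x + 1)"
  proof
    assume "rtl_min A (x + 1)"
    then have "A ! (x + 1 - 1) < A ! (k - 1)" using \<open>x + 1 < k\<close> positions by blast
    then show False using \<open>u \<le> A ! (x + 1 - 1)\<close> A_k by simp
  qed
qed (use positions rtl_min_x_y(1) in auto)

lemma A_not_upt: "A \<noteq> [0..<length A]"
proof
  assume "A = [0..<length A]"
  moreover have "x - 1 < length A" "y - 1 < length A" using positions by auto
  ultimately have "A ! (x - 1) = x - 1" "A ! (y - 1) = y - 1" by (metis nth_upt add_0)+
  then show False using A_x A_y positions by simp
qed

end

section \<open>The bijection\<close>

definition f52 :: "nat list \<Rightarrow> nat list" where
  "f52 s = s[Prm s (rpos s) - 1 := Rmin s (rpos s + 1)]"

definition g52 :: "nat list \<Rightarrow> nat list" where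
  "g52 t = t[second_rightmost_occ t (Rmin t (rpos t)) - 1 := Rmin t (rpos t - 1)]"

locale f52_exchange = separated_exchange +
  fixes p :: nat
  assumes ascent_A: "is_ascent_seq A"
    and Prm_A_p: "p < rmin A" "Prm A p = y"
    and rpos_A: "rpos A = p"
begin

lemma rpos_B: "rpos B = Suc p"
  using rpos_exchange[OF Prm_A_p] rpos_A by simp

lemma Rmin_p: "Rmin A p = v" "Rmin B p = v"
  using Prm_A_p A_y Rmin_B[of p] unfolding Rmin_def by simp_all

lemma Rmin_Suc_p: "Rmin A (Suc p) = u" "Rmin B (Suc p) = u"
  using Prm_Suc[OF Prm_A_p] Rmin_B[of "Suc p"] by simp_all

lemma f52_A: "f52 A = B"
  unfolding f52_def rpos_A using Prm_A_p Rmin_Suc_p B_def by simp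

lemma g52_B: "g52 B = A"
  unfolding g52_def rpos_B using Rmin_Suc_p Rmin_p occs_B_u A_eq by simp

lemma sebr_A: "u \<le> sebr A"
proof -
  let ?E = "{A ! (i - 1) | i. x < i \<and> i < y}"
  have "sebr A = Min ?E"
    unfolding sebr_def Let_def rpos_A Rmin_p rightmost_occ_def[symmetric] occs_A_v
    using two_le_card_occs_A_v separated by simp
  moreover have "finite ?E" by (rule finite_image_set) simp
  moreover have "A ! x \<in> ?E" using separated by force
  then have "?E \<noteq> {}" by blast
  moreover have "\<forall>e \<in> ?E. u \<le> e" using large_after_x positions by force
  ultimately show ?thesis using Min_ge_iff by simp
qed

lemma A_in_T52: "A \<in> T52"
proof -
  have "sebr A \<noteq> 0" using sebr_A v_less_u by simp
  then show ?thesis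
    unfolding T52_def ascseqs_star_def mem_Collect_eq rpos_A Suc_eq_plus1[symmetric]
      Prm_Suc[OF Prm_A_p] Rmin_Suc_p Prm_A_p(2)
    using ascent_A A_not_upt rmin_add_two_le_length_A sebr_A separated Prm_Suc[OF Prm_A_p] by simp
qed

lemma B_in_target52: "B \<in> target52 (length A)"
  unfolding target52_def ascseqs_def adjacent_def mem_Collect_eq rpos_B diff_Suc_1
    Rmin_p Rmin_Suc_p rightmost_occ_B_v occs_B_u
  using is_ascent_seq_B ascent_A length_B separated by simp

lemma zero_A: "zero A = zero B + chi (p = 0)"
proof -
  have "A \<noteq> []" using positions by auto
  then have "p = 0 \<longleftrightarrow> v = 0"
    using Rmin_0[OF ascent_A] Rmin_strict_mono[of 0 p A] Prm_A_p(1) Rmin_p by (cases "p = 0") auto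
  moreover have "{i. i < length A \<and> A ! i = 0}
      = (if v = 0 then insert (y - 1) {i. i < length B \<and> B ! i = 0}
         else {i. i < length B \<and> B ! i = 0})"
    using A_y B_y B_nth length_B positions v_less_u
    by (auto simp: B_def nth_list_update)
  moreover have "y - 1 \<notin> {i. i < length B \<and> B ! i = 0}" using B_y v_less_u by auto
  ultimately show ?thesis unfolding zero_def chi_def by simp
qed

lemma ealm_A: "ealm A + chi (y = maxst A + 1) = ealm B"
proof (cases "y = maxst A + 1")
  case True
  have fixed: "A ! (i - 1) = i - 1" if "1 \<le> i" "i < y" for i
  proof -
    have "i \<in> {1..maxst A}" using that True by simp
    then show ?thesis using maxst_fixed_points[OF ascent_A] by blast
  qed
  have "v = x - 1" using fixed[of x] A_x positions by simp
  moreover have "u \<le> x" using fixed[of "x + 1"] large_after_x[of "x + 1"] positions separated by simp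
  ultimately have "u = v + 1" using v_less_u positions by simp
  moreover have "ealm A = v" "ealm B = u"
    unfolding ealm_def using True maxst_B[OF ascent_A] length_B A_y B_y positions by auto
  ultimately show ?thesis unfolding chi_def using True by simp
next
  case False
  then have "maxst A \<noteq> y - 1" using positions by auto
  then show ?thesis
    unfolding ealm_def chi_def using False maxst_B[OF ascent_A] length_B B_nth[of "maxst A + 1"]
    by simp
qed

end

lemma T52_f52_exchange:
  assumes "s \<in> T52"
  shows "\<exists>x y k v u. f52_exchange s (f52 s) x y k v u (rpos s)"
proof -
  have ascent: "is_ascent_seq s" and sebr: "sebr s \<noteq> 0" and Suc_p: "rpos s + 1 < rmin s"
    and sebr_ge: "Rmin s (rpos s + 1) \<le> sebr s" and sep: "Prm s (rpos s + 1) \<noteq> Prm s (rpos s) + 1"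
    using assms unfolding T52_def ascseqs_star_def by auto
  define p where "p = rpos s"
  define v where "v = Rmin s p"
  define y where "y = Prm s p"
  define u where "u = Rmin s (p + 1)"
  define k where "k = Prm s (p + 1)"
  define x where "x = second_rightmost_occ s v"
  have p: "p < rmin s" "Suc p < rmin s" using Suc_p unfolding p_def by simp_all
  have y_last: "rightmost_occ s v = y" unfolding v_def y_def using rightmost_occ_Rmin[OF p(1)] .
  note sebr_facts = sebr_nonzero[OF sebr, folded p_def, folded v_def, unfolded y_last, folded x_def]
  have x: "x \<in> occs s v" using second_rightmost_occ(1)[OF sebr_facts(1)] unfolding x_def .
  have f52: "f52 s = s[y - 1 := u]" unfolding f52_def y_def u_def p_def ..
  have pos: "1 \<le> x" "x < y" "y < k" "k \<le> length s"
    using x sebr_facts(2) Prm_strict_mono[of p "p + 1" s] Prm_bounds[OF p(2)] p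
    unfolding y_def k_def occs_def by auto
  have vals: "s ! (x - 1) = v" "s ! (y - 1) = v" "s ! (k - 1) = u" "v < u"
    using x Rmin_strict_mono[of p "p + 1" s] p
    unfolding occs_def v_def y_def u_def k_def Rmin_def by auto
  have "rmin s \<noteq> length s" using rmin_less_length[of x y s] pos vals by simp
  then have not_rep: "\<not> repeated_rmin s (Suc p)" using le_rpos[of s "Suc p"] p unfolding p_def by auto
  have large: "u \<le> s ! (j - 1)" if "x < j" "j \<le> length s" "j \<noteq> y" for j
  proof (cases "j < y")
    case True
    then show ?thesis using sebr_facts(3)[of j] sebr_ge that unfolding u_def p_def by simp
  next
    case False
    then show ?thesis using Rmin_Suc_le_after_Prm[of p s j] p that unfolding u_def y_def by simp
  qed
  have unique: "j = k" if "y < j" "j \<le> length s" "s ! (j - 1) = u" for j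
    using Rmin_Suc_occurs_once[OF not_rep p(2), of j] that unfolding u_def k_def y_def by simp
  have "x + 1 < y" "y + 1 < k" using sebr_facts(2) sep pos unfolding y_def k_def p_def by auto
  then have "f52_exchange s (f52 s) x y k v u p"
    using f52 pos vals large unique ascent p y_def p_def by unfold_locales auto
  then show ?thesis unfolding p_def by blast
qed

lemma target52_g52_exchange:
  assumes "t \<in> target52 n"
  shows "\<exists>x y k v u p. f52_exchange (g52 t) t x y k v u p"
proof -
  have ascent: "is_ascent_seq t" and q0: "rpos t \<noteq> 0"
    and sep: "\<not> adjacent (rightmost_occ t (Rmin t (rpos t - 1))) (second_rightmost_occ t (Rmin t (rpos t)))"
      "\<not> adjacent (second_rightmost_occ t (Rmin t (rpos t))) (rightmost_occ t (Rmin t (rpos t)))"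
    using assms unfolding target52_def ascseqs_def by auto
  define p where "p = rpos t - 1"
  have q: "rpos t = Suc p" using q0 unfolding p_def by simp
  define v where "v = Rmin t p"
  define x where "x = Prm t p"
  define u where "u = Rmin t (Suc p)"
  define k where "k = Prm t (Suc p)"
  define y where "y = second_rightmost_occ t u"
  define s where "s = t[y - 1 := v]"
  note y = second_rightmost_occ_Rmin_rpos[OF q0, unfolded q diff_Suc_1,
      folded u_def, folded y_def x_def k_def]
  have p: "p < rmin t" "Suc p < rmin t" using rpos_nonzero(2)[OF q0] q by simp_all
  have t_x: "1 \<le> x" "t ! (x - 1) = v" using Prm_bounds[OF p(1)] unfolding x_def v_def Rmin_def by auto
  have t_k: "k \<le> length t" "t ! (k - 1) = u"
    using Prm_bounds[OF p(2)] unfolding k_def u_def Rmin_def by auto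
  have t_s: "t = s[y - 1 := u]" unfolding s_def using y(3) by (metis list_update_id list_update_overwrite)
  have pos: "1 \<le> x" "x < y" "y < k" "k \<le> length s" using t_x(1) y(1,2) t_k(1) unfolding s_def by auto
  have s_nth: "s ! (j - 1) = t ! (j - 1)" if "j \<noteq> y" "1 \<le> j" for j
    using pos that unfolding s_def by simp
  have vals: "s ! (x - 1) = v" "s ! (y - 1) = v" "s ! (k - 1) = u" "v < u"
    using pos t_x t_k s_nth[of x] s_nth[of k] Rmin_strict_mono[of p "Suc p" t] p(2)
    by (auto simp: s_def v_def u_def)
  have large: "u \<le> s ! (j - 1)" if "x < j" "j \<le> length s" "j \<noteq> y" for j
    using Rmin_Suc_le_after_Prm[of p t j] p that s_nth[of j] pos unfolding u_def x_def
    by (simp add: s_def)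
  have unique: "j = k" if "y < j" "j \<le> length s" "s ! (j - 1) = u" for j
    using y(4)[of j] that pos s_nth[of j] by (simp add: s_def)
  have "\<not> adjacent x y" "\<not> adjacent y k"
    using sep unfolding q diff_Suc_1 v_def[symmetric] u_def[symmetric] y_def[symmetric]
      rightmost_occ_Rmin[OF p(1), folded v_def x_def] rightmost_occ_Rmin[OF p(2), folded u_def k_def] .
  then have separated: "x + 1 < y" "y + 1 < k" using pos unfolding adjacent_def by auto
  interpret separated_exchange s t x y k v u
    using t_s pos vals large unique separated by unfold_locales auto
  have p_s: "p < rmin s" using p(1) rmin_B by simp
  then have Prm_s: "Prm s p = y" using Prm_B_iff[OF p_s] unfolding x_def by simp
  have "g52 t = s" unfolding g52_def q s_def y_def u_def v_def by simp
  moreover have "f52_exchange s t x y k v u p"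
    using ascent is_ascent_seq_B rpos_exchange[OF p_s Prm_s] q p_s Prm_s by unfold_locales auto
  ultimately show ?thesis by blast
qed

lemma f52_on_T52:
  assumes "s \<in> T52"
  shows "f52 s \<in> target52 (length s)" "g52 (f52 s) = s"
    and "asc s = asc (f52 s) \<and> rep s = rep (f52 s) \<and> maxst s = maxst (f52 s) \<and>
      rmin s = rmin (f52 s) \<and> rpos s + 1 = rpos (f52 s) \<and> zero s = zero (f52 s) + chi (rpos s = 0) \<and>
      ealm s + chi (Prm s (rpos s) = maxst s + 1) = ealm (f52 s)"
proof -
  obtain x y k v u where "f52_exchange s (f52 s) x y k v u (rpos s)"
    using T52_f52_exchange[OF assms] by blast
  then interpret f52_exchange s "f52 s" x y k v u "rpos s" .
  show "f52 s \<in> target52 (length s)" "g52 (f52 s) = s" by (fact B_in_target52 g52_B)+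
  show "asc s = asc (f52 s) \<and> rep s = rep (f52 s) \<and> maxst s = maxst (f52 s) \<and>
      rmin s = rmin (f52 s) \<and> rpos s + 1 = rpos (f52 s) \<and> zero s = zero (f52 s) + chi (rpos s = 0) \<and>
      ealm s + chi (Prm s (rpos s) = maxst s + 1) = ealm (f52 s)"
    using asc_B set_B length_B maxst_B[OF ascent_A] rmin_B rpos_B zero_A ealm_A Prm_A_p
    unfolding rep_def by simp
qed

lemma g52_on_target52:
  assumes "t \<in> target52 n"
  shows "g52 t \<in> T52 \<inter> ascseqs n" "f52 (g52 t) = t"
proof -
  obtain x y k v u p where "f52_exchange (g52 t) t x y k v u p"
    using target52_g52_exchange[OF assms] by blast
  then interpret f52_exchange "g52 t" t x y k v u p .
  have "length (g52 t) = n" using assms length_B unfolding target52_def ascseqs_def by simp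
  then show "g52 t \<in> T52 \<inter> ascseqs n" using A_in_T52 ascent_A unfolding ascseqs_def by simp
  show "f52 (g52 t) = t" by (rule f52_A)
qed

theorem mainTheorem14:
  fixes n :: nat
  shows "\<exists>f. bij_betw f (T52 \<inter> ascseqs n) (target52 n) \<and>
    (\<forall>s \<in> T52 \<inter> ascseqs n.
       asc s = asc (f s) \<and> rep s = rep (f s) \<and> maxst s = maxst (f s) \<and> rmin s = rmin (f s) \<and>
       rpos s + 1 = rpos (f s) \<and>
       zero s = zero (f s) + chi (rpos s = 0) \<and>
       ealm s + chi (Prm s (rpos s) = maxst s + 1) = ealm (f s))"
proof (intro exI conjI)
  show "bij_betw f52 (T52 \<inter> ascseqs n) (target52 n)"
    by (rule bij_betw_byWitness[where f' = g52])
      (use f52_on_T52 g52_on_target52 in \<open>auto simp: ascseqs_def\<close>)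
  show "\<forall>s \<in> T52 \<inter> ascseqs n.
       asc s = asc (f52 s) \<and> rep s = rep (f52 s) \<and> maxst s = maxst (f52 s) \<and> rmin s = rmin (f52 s) \<and>
       rpos s + 1 = rpos (f52 s) \<and>
       zero s = zero (f52 s) + chi (rpos s = 0) \<and>
       ealm s + chi (Prm s (rpos s) = maxst s + 1) = ealm (f52 s)"
    using f52_on_T52(3) by blast
qed

end
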